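(* Let $\mu,\nu$ be probability distributions on a finite set with $\mathrm{supp}\,\mu\subseteq\mathrm{supp}\,\nu$, and let $\epsilon\in[0,1]$. Then \[ D\big((1-\epsilon)\mu+\epsilon\nu\,\big\|\,\nu\big)\le(1-\epsilon)D(\mu\|\nu)-\big(1-\nu(\mathrm{supp}\,\mu)\big)\,\epsilon\log\frac1\epsilon, \] with the convention $0\log\frac10=0$.
   Context: $D(\mu\|\nu)=\sum_{x}\mu(x)\log_2\frac{\mu(x)}{\nu(x)}$ is the Kullback–Leibler divergence; $\mathrm{supp}\,\mu$ is the support of $\mu$ and $\nu(S)=\sum_{x\in S}\nu(x)$. *)

theory Defs
  imports "HOL-Analysis.Analysis"
begin

definition is_distr :: "('a::finite \<Rightarrow> real) \<Rightarrow> bool" where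
  "is_distr p \<longleftrightarrow> (\<forall>x. p x \<ge> 0) \<and> (\<Sum>x\<in>UNIV. p x) = 1"

definition supp :: "('a \<Rightarrow> real) \<Rightarrow> 'a set" where
  "supp p = {x. p x \<noteq> 0}"

text \<open>Kullback--Leibler divergence in bits, with the convention 0 log(0/q) = 0;
  only used when supp mu is contained in supp nu.\<close>
definition KL :: "('a::finite \<Rightarrow> real) \<Rightarrow> ('a \<Rightarrow> real) \<Rightarrow> real" where
  "KL mu nu = (\<Sum>x\<in>supp mu. mu x * log 2 (mu x / nu x))"

definition meas :: "('a::finite \<Rightarrow> real) \<Rightarrow> 'a set \<Rightarrow> real" where
  "meas nu S = (\<Sum>x\<in>S. nu x)"

definition xlog_inv :: "real \<Rightarrow> real" where
  "xlog_inv e = (if e = 0 then 0 else e * log 2 (1 / e))"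

end

theory Submission
  imports Defs
begin

text \<open>On \<open>supp \<mu>\<close> the summands of the mixture's divergence are bounded pointwise by
  \<open>(1 - \<epsilon>) \<mu> log (\<mu>/\<nu>)\<close>: this is convexity of \<open>t log t\<close> between \<open>\<mu>/\<nu>\<close> and \<open>1\<close>, where it
  vanishes. Off \<open>supp \<mu>\<close> the mixture is \<open>\<epsilon> \<nu>\<close>, so those summands add up to exactly
  \<open>\<nu>(supp \<nu> - supp \<mu>) \<epsilon> log \<epsilon> = -(1 - \<nu>(supp \<mu>)) \<epsilon> log (1/\<epsilon>)\<close>.\<close>

lemma xln_tangent:
  fixes a b :: real
  assumes "0 < a" "0 < b"
  shows "b * ln a + (b - a) \<le> b * ln b"
proof -
  have "ln (a / b) \<le> a / b - 1"
    using assms by (intro ln_le_minus_one) simp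
  then have "b * (ln a - ln b) \<le> b * (a / b - 1)"
    using assms by (simp add: ln_div)
  also have "\<dots> = a - b"
    using assms by (simp add: field_simps)
  finally show ?thesis
    by (simp add: algebra_simps)
qed

text \<open>Convexity of \<open>t ln t\<close>, obtained by averaging its tangent-line bounds at the mixture point.\<close>
lemma mix_one_xln_le:
  fixes b e :: real
  assumes "0 < b" "0 \<le> e" "e \<le> 1"
  shows "((1 - e) * b + e) * ln ((1 - e) * b + e) \<le> (1 - e) * (b * ln b)"
proof -
  define a where "a = (1 - e) * b + e"
  have "0 < a"
    using assms unfolding a_def
    by (cases "e = 0") (auto intro: add_nonneg_pos add_pos_nonneg)
  have "(1 - e) * (b * ln a + (b - a)) \<le> (1 - e) * (b * ln b)"
    using xln_tangent[OF \<open>0 < a\<close> \<open>0 < b\<close>] assms by (intro mult_left_mono) auto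
  moreover have "e * (ln a + (1 - a)) \<le> e * 0"
    using xln_tangent[OF \<open>0 < a\<close>, of 1] assms by (intro mult_left_mono) auto
  moreover have "a * ln a = (1 - e) * (b * ln a + (b - a)) + e * (ln a + (1 - a))"
    by (simp add: a_def algebra_simps)
  ultimately show ?thesis
    unfolding a_def[symmetric] by linarith
qed

lemma mix_log_ratio_le:
  fixes c m n e :: real
  assumes "1 < c" "0 < m" "0 < n" "0 \<le> e" "e \<le> 1"
  shows "((1 - e) * m + e * n) * log c (((1 - e) * m + e * n) / n)
           \<le> (1 - e) * (m * log c (m / n))"
proof -
  define b where "b = m / n"
  have "0 < b" using assms by (simp add: b_def)
  have m_eq: "m = n * b"
    using assms by (simp add: b_def)
  have mix: "((1 - e) * m + e * n) / n = (1 - e) * b + e"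
    using assms by (simp add: m_eq field_simps)
  have "((1 - e) * m + e * n) * log c (((1 - e) * m + e * n) / n)
          = n * (((1 - e) * b + e) * ln ((1 - e) * b + e)) / ln c"
    unfolding mix log_def by (simp add: m_eq add_divide_distrib diff_divide_distrib algebra_simps)
  also have "\<dots> \<le> n * ((1 - e) * (b * ln b)) / ln c"
    using mix_one_xln_le[OF \<open>0 < b\<close> assms(4,5)] assms
    by (intro divide_right_mono mult_left_mono) auto
  also have "\<dots> = (1 - e) * (m * log c (m / n))"
    using assms by (simp add: m_eq log_def)
  finally show ?thesis .
qed

lemma supp_mixture:
  fixes mu nu :: "'a \<Rightarrow> real" and e :: real
  assumes "\<And>x. 0 \<le> mu x" "\<And>x. 0 \<le> nu x" "supp mu \<subseteq> supp nu" "0 < e" "e \<le> 1"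
  shows "supp (\<lambda>x. (1 - e) * mu x + e * nu x) = supp nu"
proof -
  have "(1 - e) * mu x + e * nu x \<noteq> 0 \<longleftrightarrow> nu x \<noteq> 0" for x
  proof
    assume "nu x \<noteq> 0"
    then have "0 < e * nu x"
      using assms(2)[of x] \<open>0 < e\<close> by (simp add: less_le)
    moreover have "0 \<le> (1 - e) * mu x"
      using assms(1)[of x] \<open>e \<le> 1\<close> by simp
    ultimately show "(1 - e) * mu x + e * nu x \<noteq> 0" by linarith
  qed (use assms(3) in \<open>auto simp: supp_def\<close>)
  then show ?thesis by (simp add: supp_def)
qed

lemma meas_supp_diff:
  assumes "is_distr nu" "S \<subseteq> supp nu"
  shows "meas nu (supp nu - S) = 1 - meas nu S"
proof -
  have "meas nu (supp nu) = meas nu UNIV"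
    unfolding meas_def by (rule sum.mono_neutral_left) (auto simp: supp_def)
  then have "meas nu (supp nu) = 1"
    using assms(1) by (simp add: is_distr_def meas_def)
  then show ?thesis
    using sum.subset_diff[OF assms(2) finite, of nu] by (simp add: meas_def)
qed

lemma xlog_inv_pos:
  "0 < e \<Longrightarrow> xlog_inv e = - (e * log 2 e)"
  by (simp add: xlog_inv_def log_divide)

theorem lemma6:
  fixes mu nu :: "'a::finite \<Rightarrow> real" and \<epsilon> :: real
  assumes "is_distr mu" and "is_distr nu"
    and "supp mu \<subseteq> supp nu"
    and "0 \<le> \<epsilon>" and "\<epsilon> \<le> 1"
  shows "KL (\<lambda>x. (1 - \<epsilon>) * mu x + \<epsilon> * nu x) nu
           \<le> (1 - \<epsilon>) * KL mu nu - (1 - meas nu (supp mu)) * xlog_inv \<epsilon>"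
proof (cases "\<epsilon> = 0")
  case True
  then show ?thesis by (simp add: xlog_inv_def)
next
  case False
  define p where "p x = (1 - \<epsilon>) * mu x + \<epsilon> * nu x" for x
  define summand where "summand x = p x * log 2 (p x / nu x)" for x
  have nonneg: "\<And>x. 0 \<le> mu x" "\<And>x. 0 \<le> nu x"
    using assms(1,2) by (auto simp: is_distr_def)
  have "supp p = supp nu"
    unfolding p_def using assms False by (intro supp_mixture nonneg) auto
  then have "KL p nu = sum summand (supp nu - supp mu) + sum summand (supp mu)"
    using sum.subset_diff[OF assms(3) finite] by (simp add: KL_def summand_def)
  moreover have "summand x \<le> (1 - \<epsilon>) * (mu x * log 2 (mu x / nu x))" if "x \<in> supp mu" for x
  proof -
    have "0 < mu x" "0 < nu x"
      using that assms(3) nonneg[of x] by (auto simp: supp_def less_le)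
    then show ?thesis
      unfolding summand_def p_def using assms(4,5) by (intro mix_log_ratio_le) auto
  qed
  then have "sum summand (supp mu) \<le> (1 - \<epsilon>) * KL mu nu"
    unfolding KL_def sum_distrib_left by (rule sum_mono)
  moreover have "sum summand (supp nu - supp mu) = meas nu (supp nu - supp mu) * (\<epsilon> * log 2 \<epsilon>)"
    unfolding meas_def sum_distrib_right
    by (intro sum.cong) (auto simp: supp_def summand_def p_def)
  ultimately have "KL p nu \<le> (1 - \<epsilon>) * KL mu nu - (1 - meas nu (supp mu)) * xlog_inv \<epsilon>"
    using assms False by (simp add: meas_supp_diff xlog_inv_pos)
  then show ?thesis
    unfolding p_def[abs_def] .
qed

end
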